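(* For any number $c$ with $0<c<\min\{k_1|L_0|^2/2,\ k_2(\mu-|A_0|)^2/2\}$, the set of all critical points of $V$ in $V^{-1}([0,c])$ equals $V^{-1}(0)=\{(x,v)\in\mathbb R^3_0\times\mathbb R^3: L(x,v)=L_0,\ A(x,v)=A_0\}$.
   Context: $\mathbb R^3_0=\mathbb R^3\setminus\{0\}$, $\mu>0$. $L(x,v)=x\times v$ and $A(x,v)=v\times(x\times v)-\mu x/|x|$. Fix $L_0,A_0\in\mathbb R^3$ with $L_0\perp A_0$, $L_0\ne0$, $|A_0|<\mu$. With $k_1,k_2>0$, $V(x,v)=\tfrac{k_1}{2}|L(x,v)-L_0|^2+\tfrac{k_2}{2}|A(x,v)-A_0|^2$ on $\mathbb R^3_0\times\mathbb R^3$. *)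

theory Defs
  imports "HOL-Analysis.Analysis"
begin

definition Lmom :: "real^3 \<Rightarrow> real^3 \<Rightarrow> real^3" where
  "Lmom x v = cross3 x v"

definition Avec :: "real \<Rightarrow> real^3 \<Rightarrow> real^3 \<Rightarrow> real^3" where
  "Avec \<mu> x v = cross3 v (cross3 x v) - (\<mu> / norm x) *\<^sub>R x"

definition Vfun :: "real \<Rightarrow> real \<Rightarrow> real \<Rightarrow> real^3 \<Rightarrow> real^3 \<Rightarrow> (real^3) * (real^3) \<Rightarrow> real" where
  "Vfun \<mu> k1 k2 L0 A0 p =
     k1 / 2 * (norm (Lmom (fst p) (snd p) - L0))\<^sup>2
   + k2 / 2 * (norm (Avec \<mu> (fst p) (snd p) - A0))\<^sup>2"

definition phase_space :: "((real^3) * (real^3)) set" where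
  "phase_space = {p. fst p \<noteq> 0}"

definition critical_point :: "('a::real_normed_vector \<Rightarrow> real) \<Rightarrow> 'a \<Rightarrow> bool" where
  "critical_point f p \<longleftrightarrow> (f has_derivative (\<lambda>h. 0)) (at p)"

end

theory Submission
  imports Defs
begin

unbundle cross3_syntax

text \<open>
  Write \<open>L'\<close> and \<open>A'\<close> for the differentials of \<open>L\<close> and \<open>A\<close> at \<open>(x, v)\<close>. Since
  \<open>L \<bullet> A\<close> vanishes identically, \<open>A \<bullet> L' + L \<bullet> A' = 0\<close>; when \<open>L \<noteq> 0\<close> this is the only
  relation, i.e. every \<open>(p, q)\<close> with \<open>p \<bullet> L' + q \<bullet> A' = 0\<close> is a multiple \<open>t (A, L)\<close>.
  At a critical point of \<open>V\<close> this applies to \<open>p = k1 (L - L0)\<close>, \<open>q = k2 (A - A0)\<close>, so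
  \<open>L0 = L - (t/k1) A\<close> and \<open>A0 = A - (t/k2) L\<close>, and \<open>L0 \<bullet> A0 = -t (|L|\<^sup>2/k2 + |A|\<^sup>2/k1)\<close>
  vanishes only for \<open>t = 0\<close>, that is \<open>V = 0\<close>. Below the level \<open>k1 |L0|\<^sup>2 / 2\<close> we have
  \<open>L \<noteq> 0\<close>, because \<open>L = 0\<close> already forces \<open>V \<ge> k1 |L0|\<^sup>2 / 2\<close>.
\<close>

lemma bounded_bilinear_cross3: "bounded_bilinear cross3"
  using bilinear_cross bilinear_conv_bounded_bilinear by blast

lemmas has_derivative_cross3 = bounded_bilinear.FDERIV[OF bounded_bilinear_cross3]

definition Avec_differential :: "real \<Rightarrow> real^3 \<Rightarrow> real^3 \<Rightarrow> real^3 \<Rightarrow> real^3 \<Rightarrow> real^3" where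
  "Avec_differential \<mu> x v a b = b \<times> (x \<times> v) + v \<times> (a \<times> v + x \<times> b)
     - ((\<mu> / norm x) *\<^sub>R a - (\<mu> * (x \<bullet> a) / norm x ^ 3) *\<^sub>R x)"

lemma has_derivative_Lmom:
  "((\<lambda>p. Lmom (fst p) (snd p)) has_derivative (\<lambda>h. fst h \<times> v + x \<times> snd h)) (at (x, v))"
  unfolding Lmom_def
  by (rule has_derivative_eq_rhs, (rule derivative_eq_intros has_derivative_cross3 refl)+) (simp add: add.commute)

lemma has_derivative_Avec:
  assumes "x \<noteq> 0"
  shows "((\<lambda>p. Avec \<mu> (fst p) (snd p)) has_derivative
           (\<lambda>h. Avec_differential \<mu> x v (fst h) (snd h))) (at (x, v))"
proof -
  have norm_fst: "((\<lambda>p. norm (fst p)) has_derivative (\<lambda>h. fst h \<bullet> sgn x)) (at (x, v))"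
    using has_derivative_compose[OF has_derivative_fst[OF has_derivative_ident]
        has_derivative_norm[of "fst (x, v)"]] assms
    by simp
  have norm_x: "norm (fst (x, v)) \<noteq> 0" using assms by simp
  show ?thesis
    unfolding Avec_def
    apply (rule has_derivative_eq_rhs)
     apply (rule derivative_eq_intros has_derivative_cross3 norm_fst norm_x refl)+
    apply (simp add: Avec_differential_def sgn_div_norm divide_inverse power3_eq_cube algebra_simps fun_eq_iff inner_commute)
    done
qed

lemma has_derivative_Vfun:
  assumes "x \<noteq> 0"
  shows "(Vfun \<mu> k1 k2 L0 A0 has_derivative
           (\<lambda>h. k1 * ((Lmom x v - L0) \<bullet> (fst h \<times> v + x \<times> snd h))
              + k2 * ((Avec \<mu> x v - A0) \<bullet> Avec_differential \<mu> x v (fst h) (snd h)))) (at (x, v))"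
  unfolding Vfun_def power2_norm_eq_inner
  apply (rule has_derivative_eq_rhs)
   apply (rule derivative_eq_intros has_derivative_Lmom has_derivative_Avec[OF assms] refl)+
  apply (simp add: fun_eq_iff inner_commute algebra_simps)
  done

lemma Lmom_inner_Avec: "Lmom x v \<bullet> Avec \<mu> x v = 0"
  unfolding Lmom_def Avec_def by (simp add: inner_diff_right dot_cross_self)

lemma Lmom_inner_Avec_differential_eq_0:
  assumes "x \<noteq> 0"
  shows "Avec \<mu> x v \<bullet> (a \<times> v + x \<times> b) + Lmom x v \<bullet> Avec_differential \<mu> x v a b = 0"
proof -
  have "((\<lambda>p. Lmom (fst p) (snd p) \<bullet> Avec \<mu> (fst p) (snd p)) has_derivative
      (\<lambda>h. Lmom x v \<bullet> Avec_differential \<mu> x v (fst h) (snd h)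
         + (fst h \<times> v + x \<times> snd h) \<bullet> Avec \<mu> x v)) (at (x, v))"
    using has_derivative_inner[OF has_derivative_Lmom has_derivative_Avec[OF assms]] by simp
  moreover have "((\<lambda>p. Lmom (fst p) (snd p) \<bullet> Avec \<mu> (fst p) (snd p)) has_derivative (\<lambda>h. 0)) (at (x, v))"
    by (simp add: Lmom_inner_Avec)
  ultimately have "(\<lambda>h. Lmom x v \<bullet> Avec_differential \<mu> x v (fst h) (snd h)
         + (fst h \<times> v + x \<times> snd h) \<bullet> Avec \<mu> x v) = (\<lambda>h. 0)"
    by (rule has_derivative_unique)
  from fun_cong[OF this, of "(a, b)"] show ?thesis by (simp add: inner_commute add.commute)
qed

lemma cross3_frame_orthogonal_eq_0:
  fixes x v z :: "real^3"
  assumes "z \<bullet> x = 0" "z \<bullet> v = 0" "z \<bullet> (x \<times> v) = 0" "x \<times> v \<noteq> 0"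
  shows "z = 0"
proof -
  have "(a \<bullet> (b \<times> c)) *\<^sub>R z = (z \<bullet> a) *\<^sub>R (b \<times> c) + (z \<bullet> b) *\<^sub>R (c \<times> a) + (z \<bullet> c) *\<^sub>R (a \<times> b)"
    for a b c :: "real^3"
    by (simp add: cross3_simps forall_3)
  from this[of x v "x \<times> v"]
  have "(x \<bullet> (v \<times> (x \<times> v))) *\<^sub>R z = 0"
    by (simp only: assms(1-3) scaleR_zero_left add_0)
  moreover have "x \<bullet> (v \<times> (x \<times> v)) = (x \<times> v) \<bullet> (x \<times> v)"
    using cross_triple[of x v "x \<times> v"] by (simp add: inner_commute)
  ultimately show ?thesis using assms(4) by simp
qed

lemma cross3_eq_0_imp_parallel:
  fixes x y :: "real^3"
  assumes "x \<times> y = 0" "x \<noteq> 0"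
  shows "y = ((x \<bullet> y) / (x \<bullet> x)) *\<^sub>R x"
proof (rule cross_dot_cancel[OF _ _ \<open>x \<noteq> 0\<close>])
  have "x \<bullet> x \<noteq> 0" using \<open>x \<noteq> 0\<close> by simp
  then show "x \<bullet> y = x \<bullet> (((x \<bullet> y) / (x \<bullet> x)) *\<^sub>R x)" by simp
  show "x \<times> y = x \<times> (((x \<bullet> y) / (x \<bullet> x)) *\<^sub>R x)"
    using \<open>x \<times> y = 0\<close> by (simp add: cross_mult_right)
qed

lemma cross3_differential_annihilator_eq_0:
  fixes p x v :: "real^3"
  assumes annihilates: "\<And>a b. p \<bullet> (a \<times> v + x \<times> b) = 0" and L: "x \<times> v \<noteq> 0"
  shows "p = 0"
proof -
  have "(v \<times> p) \<bullet> (v \<times> p) = p \<bullet> ((v \<times> p) \<times> v)"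
    using cross_triple[of "v \<times> p" v p] by (simp add: inner_commute)
  also have "\<dots> = 0" using annihilates[of "v \<times> p" 0] by simp
  finally have vp: "v \<times> p = 0" by simp
  have "(p \<times> x) \<bullet> (p \<times> x) = p \<bullet> (x \<times> (p \<times> x))"
    using cross_triple[of p x "p \<times> x"] by (simp add: inner_commute)
  also have "\<dots> = 0" using annihilates[of 0 "p \<times> x"] by simp
  finally have xp: "x \<times> p = 0" by (simp add: cross_skew[of p])
  have "x \<noteq> 0" using L by auto
  with xp have "p = ((x \<bullet> p) / (x \<bullet> x)) *\<^sub>R x" by (rule cross3_eq_0_imp_parallel)
  then have "v \<times> p = - ((x \<bullet> p) / (x \<bullet> x)) *\<^sub>R (x \<times> v)"
    by (metis cross_mult_right cross_skew scaleR_minus_left scaleR_minus_right)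
  with vp L \<open>x \<noteq> 0\<close> have "x \<bullet> p = 0" by simp
  with \<open>p = _\<close> show ?thesis by simp
qed

lemma LA_differential_annihilator:
  fixes p q x v :: "real^3"
  assumes x: "x \<noteq> 0" and L_nz: "x \<times> v \<noteq> 0"
    and annihilates: "\<And>a b. p \<bullet> (a \<times> v + x \<times> b) + q \<bullet> Avec_differential \<mu> x v a b = 0"
  shows "\<exists>t. p = t *\<^sub>R Avec \<mu> x v \<and> q = t *\<^sub>R Lmom x v"
proof -
  define L where "L = x \<times> v"
  have radial: "\<mu> * (x \<bullet> x) / norm x ^ 3 = \<mu> / norm x"
    using x by (simp add: dot_square_norm power3_eq_cube power2_eq_square)
  \<comment> \<open>Testing the relation on the directions \<open>(0, x)\<close>, \<open>(0, v)\<close>, \<open>(x, 0)\<close> shows that \<open>q \<times> L\<close> is orthogonal to \<open>x\<close>, \<open>v\<close>, \<open>L\<close>.\<close>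
  have qxL: "q \<bullet> (x \<times> L) = 0"
    using annihilates[of 0 x] by (simp add: Avec_differential_def L_def)
  have "p \<bullet> L + q \<bullet> (v \<times> L) + q \<bullet> (v \<times> L) = 0"
    using annihilates[of 0 v] unfolding Avec_differential_def inner_diff_right inner_add_right
    by (simp add: L_def)
  moreover have "p \<bullet> L + q \<bullet> (v \<times> L) = 0"
    using annihilates[of x 0] by (simp add: Avec_differential_def L_def radial)
  ultimately have qvL: "q \<bullet> (v \<times> L) = 0" by simp
  have "q \<times> L = 0"
  proof (rule cross3_frame_orthogonal_eq_0)
    show "(q \<times> L) \<bullet> x = 0" "(q \<times> L) \<bullet> v = 0"
      using qxL qvL cross_triple[of q L x] cross_triple[of q L v]
      by (simp_all add: cross_skew[of L] inner_commute)
    show "(q \<times> L) \<bullet> (x \<times> v) = 0" "x \<times> v \<noteq> 0"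
      using L_nz by (simp_all add: L_def dot_cross_self)
  qed
  then have "L \<times> q = 0" by (simp add: cross_skew[of L])
  then obtain t where q: "q = t *\<^sub>R L"
    using cross3_eq_0_imp_parallel L_nz unfolding L_def by blast
  have "p - t *\<^sub>R Avec \<mu> x v = 0"
  proof (rule cross3_differential_annihilator_eq_0[OF _ L_nz])
    fix a b
    let ?D = "a \<times> v + x \<times> b"
    have "(p - t *\<^sub>R Avec \<mu> x v) \<bullet> ?D = (p \<bullet> ?D + q \<bullet> Avec_differential \<mu> x v a b)
        - t * (Avec \<mu> x v \<bullet> ?D + Lmom x v \<bullet> Avec_differential \<mu> x v a b)"
      by (simp only: q L_def Lmom_def inner_diff_left inner_scaleR_left) (simp add: algebra_simps)
    then show "(p - t *\<^sub>R Avec \<mu> x v) \<bullet> ?D = 0"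
      using annihilates[of a b] Lmom_inner_Avec_differential_eq_0[OF x, of \<mu> v a b] by simp
  qed
  with q show ?thesis by (auto simp: L_def Lmom_def)
qed

lemma Vfun_eq_0_iff:
  assumes "k1 > 0" "k2 > 0"
  shows "Vfun \<mu> k1 k2 L0 A0 p = 0 \<longleftrightarrow> Lmom (fst p) (snd p) = L0 \<and> Avec \<mu> (fst p) (snd p) = A0"
  using assms unfolding Vfun_def by (simp add: add_nonneg_eq_0_iff)

lemma cross3_ne_0_if_Vfun_less:
  assumes "k2 \<ge> 0" "Vfun \<mu> k1 k2 L0 A0 (x, v) < k1 * (norm L0)\<^sup>2 / 2"
  shows "x \<times> v \<noteq> 0"
proof
  assume "x \<times> v = 0"
  moreover have "0 \<le> k2 / 2 * (norm (Avec \<mu> x v - A0))\<^sup>2" using assms(1) by simp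
  ultimately show False using assms(2) unfolding Vfun_def Lmom_def by simp
qed

lemma critical_point_Vfun_iff:
  assumes "x \<noteq> 0"
  shows "critical_point (Vfun \<mu> k1 k2 L0 A0) (x, v) \<longleftrightarrow>
    (\<forall>a b. k1 * ((Lmom x v - L0) \<bullet> (a \<times> v + x \<times> b))
         + k2 * ((Avec \<mu> x v - A0) \<bullet> Avec_differential \<mu> x v a b) = 0)"
    (is "_ \<longleftrightarrow> (\<forall>a b. ?D a b = 0)")
proof
  assume "critical_point (Vfun \<mu> k1 k2 L0 A0) (x, v)"
  then have derivative_eq_0: "(\<lambda>h. ?D (fst h) (snd h)) = (\<lambda>h. 0)"
    unfolding critical_point_def by (rule has_derivative_unique[OF has_derivative_Vfun[OF assms]])
  show "\<forall>a b. ?D a b = 0"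
  proof (intro allI)
    fix a b
    show "?D a b = 0" using fun_cong[OF derivative_eq_0, of "(a, b)"] by simp
  qed
next
  assume "\<forall>a b. ?D a b = 0"
  then have derivative_eq_0: "(\<lambda>h. ?D (fst h) (snd h)) = (\<lambda>h. 0)" by simp
  show "critical_point (Vfun \<mu> k1 k2 L0 A0) (x, v)"
    unfolding critical_point_def derivative_eq_0[symmetric] by (rule has_derivative_Vfun[OF assms])
qed

lemma Vfun_critical_point_eq_0:
  assumes k: "k1 > 0" "k2 > 0" and orth: "L0 \<bullet> A0 = 0"
    and x: "x \<noteq> 0" and L_nz: "x \<times> v \<noteq> 0"
    and crit: "critical_point (Vfun \<mu> k1 k2 L0 A0) (x, v)"
  shows "Vfun \<mu> k1 k2 L0 A0 (x, v) = 0"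
proof -
  define L A where "L = Lmom x v" and "A = Avec \<mu> x v"
  have "\<exists>t. k1 *\<^sub>R (L - L0) = t *\<^sub>R A \<and> k2 *\<^sub>R (A - A0) = t *\<^sub>R L"
    using LA_differential_annihilator[OF x L_nz, of "k1 *\<^sub>R (L - L0)" "k2 *\<^sub>R (A - A0)" \<mu>]
      crit[unfolded critical_point_Vfun_iff[OF x]]
    unfolding L_def A_def by simp
  then obtain t where t: "k1 *\<^sub>R (L - L0) = t *\<^sub>R A" "k2 *\<^sub>R (A - A0) = t *\<^sub>R L"
    by blast
  have "L - L0 = (t / k1) *\<^sub>R A" "A - A0 = (t / k2) *\<^sub>R L"
    using arg_cong[OF t(1), of "scaleR (1 / k1)"] arg_cong[OF t(2), of "scaleR (1 / k2)"] k
    by simp_all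
  then have L0: "L0 = L - (t / k1) *\<^sub>R A" and A0: "A0 = A - (t / k2) *\<^sub>R L"
    by (simp_all add: algebra_simps)
  have LA: "L \<bullet> A = 0" unfolding L_def A_def by (rule Lmom_inner_Avec)
  have "t * ((L \<bullet> L) / k2 + (A \<bullet> A) / k1) = - (L0 \<bullet> A0)"
    unfolding L0 A0 using LA by (simp add: inner_diff_left inner_diff_right inner_commute[of A L] algebra_simps)
  moreover have "(L \<bullet> L) / k2 + (A \<bullet> A) / k1 > 0"
    using k L_nz unfolding L_def Lmom_def by (simp add: add_pos_nonneg)
  ultimately have "t = 0" using orth by simp
  then show ?thesis using t k Vfun_eq_0_iff[OF k] unfolding L_def A_def by simp
qed

lemma Vfun_eq_0_imp_critical_point:
  assumes "k1 > 0" "k2 > 0" "x \<noteq> 0" "Vfun \<mu> k1 k2 L0 A0 (x, v) = 0"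
  shows "critical_point (Vfun \<mu> k1 k2 L0 A0) (x, v)"
  using assms by (simp add: critical_point_Vfun_iff Vfun_eq_0_iff)

theorem lemma7:
  fixes \<mu> k1 k2 c :: real and L0 A0 :: "real^3"
  assumes "\<mu> > 0" and "k1 > 0" and "k2 > 0"
    and "L0 \<bullet> A0 = 0" and "L0 \<noteq> 0" and "norm A0 < \<mu>"
    and "0 < c" and "c < min (k1 * (norm L0)\<^sup>2 / 2) (k2 * (\<mu> - norm A0)\<^sup>2 / 2)"
  shows "{p \<in> phase_space. Vfun \<mu> k1 k2 L0 A0 p \<in> {0..c} \<and> critical_point (Vfun \<mu> k1 k2 L0 A0) p}
           = {p \<in> phase_space. Vfun \<mu> k1 k2 L0 A0 p = 0}
       \<and> {p \<in> phase_space. Vfun \<mu> k1 k2 L0 A0 p = 0}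
           = {p \<in> phase_space. Lmom (fst p) (snd p) = L0 \<and> Avec \<mu> (fst p) (snd p) = A0}"
proof -
  note k = \<open>k1 > 0\<close> \<open>k2 > 0\<close>
  let ?V = "Vfun \<mu> k1 k2 L0 A0"
  have critical_imp_zero: "?V (x, v) = 0"
    if "x \<noteq> 0" "?V (x, v) \<le> c" "critical_point ?V (x, v)" for x v
  proof (rule Vfun_critical_point_eq_0[OF k \<open>L0 \<bullet> A0 = 0\<close> that(1) _ that(3)])
    have "?V (x, v) < k1 * (norm L0)\<^sup>2 / 2" using that(2) assms(8) by simp
    then show "x \<times> v \<noteq> 0" using k by (intro cross3_ne_0_if_Vfun_less) simp_all
  qed
  have level_set_eq: "?V p \<in> {0..c} \<and> critical_point ?V p \<longleftrightarrow> ?V p = 0"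
    if "p \<in> phase_space" for p
  proof (cases p)
    case (Pair x v)
    with that have "x \<noteq> 0" by (simp add: phase_space_def)
    then show ?thesis
      using critical_imp_zero[of x v] Vfun_eq_0_imp_critical_point[OF k, of x \<mu> L0 A0 v] \<open>0 < c\<close> Pair
      by auto
  qed
  show ?thesis
    using level_set_eq Vfun_eq_0_iff[OF k] by blast
qed

end
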